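(* Let $n\ge 2$ and $k\ge 1$ be integers with $k<n$. Then the cubical set $$\bigcup_{i=1}^k\ \bigcup_{j\in[n],\ j\neq i}\big|[\{i\},[n]\setminus\{j\}]\big|\subseteq\mathbb R^n$$ is acyclic.
   Context: $[n]=\{1,\dots,n\}$, and for $A\subseteq B\subseteq[n]$, $[A,B]=\{C: A\subseteq C\subseteq B\}$. Its geometric realization $|[A,B]|$ is $I_1\times\dots\times I_n\subseteq\mathbb R^n$ with $I_m=\{1\}$ if $m\in A$, $I_m=[0,1]$ if $m\in B\setminus A$, $I_m=\{0\}$ if $m\notin B$. A cubical set (finite union of elementary cubes, i.e. products of intervals $[a,b]$ with $a,b\in\mathbb Z$, $b-a\in\{0,1\}$) $X$ is acyclic if it is non-empty and connected and its cubical homology groups $H_i(X)$ are trivial for all $i\ge1$. *)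

theory Defs
  imports "HOL-Analysis.Analysis"
begin

text \<open>Points of R^n are functions nat => real vanishing
outside the coordinate set {1..n}. An elementary cube is given by its list of
intervals: coordinate m in {1..n} is the integer interval [fst (Q m), snd (Q m)]
of length 0 or 1; outside {1..n} we normalise to (0,0).\<close>

type_synonym cube = "nat \<Rightarrow> int \<times> int"
type_synonym point = "nat \<Rightarrow> real"

definition elementary_cube :: "nat \<Rightarrow> cube \<Rightarrow> bool" where
  "elementary_cube n Q \<longleftrightarrow>
     (\<forall>m\<in>{1..n}. snd (Q m) - fst (Q m) \<in> {0, 1}) \<and> (\<forall>m. m \<notin> {1..n} \<longrightarrow> Q m = (0, 0))"

definition realization :: "nat \<Rightarrow> cube \<Rightarrow> point set" where
  "realization n Q = {x. (\<forall>m\<in>{1..n}. real_of_int (fst (Q m)) \<le> x m \<and> x m \<le> real_of_int (snd (Q m)))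
                        \<and> (\<forall>m. m \<notin> {1..n} \<longrightarrow> x m = 0)}"

definition nondeg :: "nat \<Rightarrow> cube \<Rightarrow> nat set" where
  "nondeg n Q = {m\<in>{1..n}. fst (Q m) \<noteq> snd (Q m)}"

definition cube_dim :: "nat \<Rightarrow> cube \<Rightarrow> nat" where
  "cube_dim n Q = card (nondeg n Q)"

definition interval_cube :: "nat \<Rightarrow> nat set \<Rightarrow> nat set \<Rightarrow> cube" where
  "interval_cube n A B = (\<lambda>m. if m \<in> {1..n} then (if m \<in> A then (1, 1) else if m \<in> B then (0, 1) else (0, 0))
                              else (0, 0))"

definition cubes_of :: "nat \<Rightarrow> point set \<Rightarrow> nat \<Rightarrow> cube set" where
  "cubes_of n X i = {Q. elementary_cube n Q \<and> cube_dim n Q = i \<and> realization n Q \<subseteq> X}"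

definition chains :: "nat \<Rightarrow> point set \<Rightarrow> nat \<Rightarrow> (cube \<Rightarrow> int) set" where
  "chains n X i = {c. finite {Q. c Q \<noteq> 0} \<and> {Q. c Q \<noteq> 0} \<subseteq> cubes_of n X i}"

text \<open>Cubical boundary of an elementary cube (Kaczynski--Mischaikow--Mrozek):
  boundary of I_1 x ... x I_n is the sum over nondegenerate coordinates m of
  (-1)^(number of nondegenerate coordinates before m) times
  (I_1 x .. x [b] x .. x I_n  -  I_1 x .. x [a] x .. x I_n) where I_m = [a,b].\<close>
definition cube_boundary :: "nat \<Rightarrow> cube \<Rightarrow> cube \<Rightarrow> int" where
  "cube_boundary n Q P =
     (\<Sum>m\<in>nondeg n Q. (-1) ^ card {m'\<in>nondeg n Q. m' < m} *
        ((if P = Q(m := (snd (Q m), snd (Q m))) then 1 else 0)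
       - (if P = Q(m := (fst (Q m), fst (Q m))) then 1 else 0)))"

definition chain_boundary :: "nat \<Rightarrow> (cube \<Rightarrow> int) \<Rightarrow> (cube \<Rightarrow> int)" where
  "chain_boundary n c = (\<lambda>P. \<Sum>Q\<in>{Q. c Q \<noteq> 0}. c Q * cube_boundary n Q P)"

definition trivial_homology :: "nat \<Rightarrow> point set \<Rightarrow> nat \<Rightarrow> bool" where
  "trivial_homology n X i \<longleftrightarrow>
     (\<forall>c\<in>chains n X i. chain_boundary n c = (\<lambda>_. 0) \<longrightarrow>
        (\<exists>d\<in>chains n X (Suc i). chain_boundary n d = c))"

text \<open>Acyclic cubical set: non-empty, connected (as a subspace of R^n, here realised inside
the product topology on nat => real; X lies in the copy of R^n of functions vanishing off
{1..n}), and H_i(X) = 0 for all i >= 1.\<close>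
definition acyclic_cubical :: "nat \<Rightarrow> point set \<Rightarrow> bool" where
  "acyclic_cubical n X \<longleftrightarrow>
     X \<noteq> {} \<and> connectedin (product_topology (\<lambda>_. euclideanreal) UNIV) X \<and>
     (\<forall>i\<ge>1. trivial_homology n X i)"

end

(* Every cube of the set is a face of the unit cube [0,1]^n, and a face lies in the set iff one
   of its coordinates i <= k is {1} and another one is {0}.  If a set S of faces is closed under
   sweeping a face on the end {x_r = 1 - v} across direction r, the sweeping map h is a chain
   homotopy: dh + hd = id - p, where p pushes the faces degenerate in direction r onto {x_r = v}.
   Hence S is acyclic as soon as its image under p is.  Collapsing x_n onto 0 and then
   x_1, ..., x_(n-1) one after the other onto 1 ends at the vertex (1, ..., 1, 0).
   Connectedness: the boxes {x_i = 1, x_j = 0} are convex, the boxes with the same i share the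
   unit vector e_i, and all boxes with j = n contain (1, ..., 1, 0). *)

theory Submission
  imports Defs
begin

section \<open>Faces of the unit cube and their boundaries\<close>

definition unit_faces :: "nat \<Rightarrow> cube set" where
  "unit_faces n = {Q. (\<forall>m\<in>{1..n}. Q m \<in> {(0,0), (1,1), (0,1)}) \<and> (\<forall>m. m \<notin> {1..n} \<longrightarrow> Q m = (0,0))}"

lemma finite_unit_faces: "finite (unit_faces n)"
proof -
  have "finite {Q. \<forall>m. (m \<in> {1..n} \<longrightarrow> Q m \<in> {(0::int,0::int), (1,1), (0,1)}) \<and> (m \<notin> {1..n} \<longrightarrow> Q m = (0,0))}"
    by (rule finite_set_of_finite_funs) auto
  then show ?thesis
    by (rule finite_subset[rotated]) (auto simp: unit_faces_def)
qed

lemma unit_faces_upd: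
  "Q \<in> unit_faces n \<Longrightarrow> r \<in> {1..n} \<Longrightarrow> x \<in> {(0,0), (1,1), (0,1)} \<Longrightarrow> Q(r := x) \<in> unit_faces n"
  by (auto simp: unit_faces_def)

lemma unit_face_coord: "Q \<in> unit_faces n \<Longrightarrow> m \<in> {1..n} \<Longrightarrow> Q m \<in> {(0,0), (1,1), (0,1)}"
  by (simp add: unit_faces_def)

lemma elementary_cube_unit_face: "Q \<in> unit_faces n \<Longrightarrow> elementary_cube n Q"
  by (auto simp: elementary_cube_def unit_faces_def)

lemma nondeg_unit_face: "Q \<in> unit_faces n \<Longrightarrow> nondeg n Q = {m\<in>{1..n}. Q m = (0,1)}"
  by (auto simp: nondeg_def dest: unit_face_coord)

lemma finite_nondeg: "finite (nondeg n Q)"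
  by (simp add: nondeg_def)

lemma nondeg_upd_interval:
  "Q \<in> unit_faces n \<Longrightarrow> r \<in> {1..n} \<Longrightarrow> nondeg n (Q(r := (0,1))) = insert r (nondeg n Q)"
  by (auto simp: nondeg_def)

lemma nondeg_upd_degenerate: "nondeg n (Q(r := (a,a))) = nondeg n Q - {r}"
  by (auto simp: nondeg_def)

lemma cube_dim_upd_interval:
  assumes "Q \<in> unit_faces n" "r \<in> {1..n}" "r \<notin> nondeg n Q"
  shows "cube_dim n (Q(r := (0,1))) = Suc (cube_dim n Q)"
  using assms by (simp add: cube_dim_def nondeg_upd_interval finite_nondeg)

lemma cube_dim_upd_degenerate:
  "r \<notin> nondeg n Q \<Longrightarrow> cube_dim n (Q(r := (a,a))) = cube_dim n Q"
  by (simp add: cube_dim_def nondeg_upd_degenerate)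

definition face_sign :: "nat set \<Rightarrow> nat \<Rightarrow> int" where
  "face_sign N m = (-1) ^ card {m'\<in>N. m' < m}"

lemma face_sign_square: "face_sign N m * face_sign N m = 1"
  by (simp add: face_sign_def power_mult_distrib[symmetric])

lemma face_sign_insert:
  assumes "finite N" "r \<notin> N" "r \<noteq> m"
  shows "face_sign (insert r N) m = (if r < m then -1 else 1) * face_sign N m"
proof (cases "r < m")
  case True
  then have "{m'\<in>insert r N. m' < m} = insert r {m'\<in>N. m' < m}" by auto
  then show ?thesis using True assms by (simp add: face_sign_def)
next
  case False
  then have "{m'\<in>insert r N. m' < m} = {m'\<in>N. m' < m}" by auto
  then show ?thesis using False by (simp add: face_sign_def)
qed

lemma face_sign_insert_self: "face_sign (insert r N) r = face_sign N r"
  by (simp add: face_sign_def) (metis (lifting) insert_iff less_irrefl)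

lemma face_sign_remove_self: "face_sign (N - {r}) r = face_sign N r"
  unfolding face_sign_def by (rule arg_cong[where f = "\<lambda>A. (-1) ^ card A"]) auto

lemma face_sign_remove:
  assumes "finite N" "m \<in> N" "r \<noteq> m"
  shows "face_sign (N - {m}) r = (if m < r then -1 else 1) * face_sign N r"
proof -
  have "face_sign N r = (if m < r then -1 else 1) * face_sign (N - {m}) r"
    using face_sign_insert[of "N - {m}" m r] assms by (simp add: insert_absorb)
  then show ?thesis by auto
qed

definition facet_difference :: "cube \<Rightarrow> nat \<Rightarrow> cube \<Rightarrow> int" where
  "facet_difference Q m P = (if P = Q(m := (1,1)) then 1 else 0) - (if P = Q(m := (0,0)) then 1 else 0)"

lemma cube_boundary_unit_face:
  assumes "Q \<in> unit_faces n"
  shows "cube_boundary n Q P = (\<Sum>m\<in>nondeg n Q. face_sign (nondeg n Q) m * facet_difference Q m P)"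
  unfolding cube_boundary_def face_sign_def facet_difference_def
  by (intro sum.cong refl) (auto simp: nondeg_unit_face[OF assms])

lemma cube_boundary_upd_interval:
  assumes Q: "Q \<in> unit_faces n" and r: "r \<in> {1..n}" "r \<notin> nondeg n Q"
  defines "N \<equiv> nondeg n Q"
  shows "cube_boundary n (Q(r := (0,1))) P = face_sign N r * facet_difference Q r P +
     (\<Sum>m\<in>N. (if r < m then -1 else 1) * face_sign N m * facet_difference (Q(r := (0,1))) m P)"
proof -
  have fN: "finite N" by (simp add: N_def finite_nondeg)
  have QU: "Q(r := (0,1)) \<in> unit_faces n" using Q r by (intro unit_faces_upd) auto
  have rN: "r \<notin> N" using r(2) by (simp add: N_def)
  have "face_sign (insert r N) m = (if r < m then -1 else 1) * face_sign N m" if "m \<in> N" for m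
    using that rN by (intro face_sign_insert[OF fN rN]) auto
  then show ?thesis
    using cube_boundary_unit_face[OF QU, of P] nondeg_upd_interval[OF Q r(1)] fN rN
    by (simp add: N_def face_sign_insert_self facet_difference_def mult.assoc cong: sum.cong)
qed

section \<open>Integer matrices indexed by faces\<close>

definition mat_mult :: "nat \<Rightarrow> (cube \<Rightarrow> cube \<Rightarrow> int) \<Rightarrow> (cube \<Rightarrow> cube \<Rightarrow> int) \<Rightarrow> cube \<Rightarrow> cube \<Rightarrow> int" where
  "mat_mult n f g Q P = (\<Sum>Q'\<in>unit_faces n. f Q Q' * g Q' P)"

definition mat_apply :: "nat \<Rightarrow> (cube \<Rightarrow> cube \<Rightarrow> int) \<Rightarrow> (cube \<Rightarrow> int) \<Rightarrow> cube \<Rightarrow> int" where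
  "mat_apply n f c = (\<lambda>P. \<Sum>Q\<in>unit_faces n. c Q * f Q P)"

lemma sum_unit_faces_delta:
  assumes "X \<in> unit_faces n"
  shows "(\<Sum>Q'\<in>unit_faces n. (if Q' = X then a else 0) * g Q') = (a::int) * g X"
proof -
  have "(\<Sum>Q'\<in>unit_faces n. (if Q' = X then a else 0) * g Q') = (\<Sum>Q'\<in>unit_faces n. if Q' = X then a * g X else 0)"
    by (intro sum.cong) auto
  then show ?thesis using assms finite_unit_faces by simp
qed

lemma mat_mult_cube_boundary_left:
  assumes Q: "Q \<in> unit_faces n"
  shows "mat_mult n (cube_boundary n) g Q P =
     (\<Sum>m\<in>nondeg n Q. face_sign (nondeg n Q) m * (g (Q(m := (1,1))) P - g (Q(m := (0,0))) P))"
proof -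
  let ?s = "face_sign (nondeg n Q)"
  have "mat_mult n (cube_boundary n) g Q P = (\<Sum>Q'\<in>unit_faces n. \<Sum>m\<in>nondeg n Q.
      ?s m * ((if Q' = Q(m := (1,1)) then g Q' P else 0) - (if Q' = Q(m := (0,0)) then g Q' P else 0)))"
    unfolding mat_mult_def cube_boundary_unit_face[OF Q] sum_distrib_right
    by (intro sum.cong refl) (auto simp: facet_difference_def algebra_simps)
  also have "\<dots> = (\<Sum>m\<in>nondeg n Q. \<Sum>Q'\<in>unit_faces n.
      ?s m * ((if Q' = Q(m := (1,1)) then g Q' P else 0) - (if Q' = Q(m := (0,0)) then g Q' P else 0)))"
    by (rule sum.swap)
  also have "\<dots> = (\<Sum>m\<in>nondeg n Q. ?s m * (g (Q(m := (1,1))) P - g (Q(m := (0,0))) P))"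
  proof (intro sum.cong refl)
    fix m assume "m \<in> nondeg n Q"
    then have "Q(m := (1,1)) \<in> unit_faces n" "Q(m := (0,0)) \<in> unit_faces n"
      using Q by (auto simp: nondeg_def intro: unit_faces_upd)
    then show "(\<Sum>Q'\<in>unit_faces n.
        ?s m * ((if Q' = Q(m := (1,1)) then g Q' P else 0) - (if Q' = Q(m := (0,0)) then g Q' P else 0))) =
      ?s m * (g (Q(m := (1,1))) P - g (Q(m := (0,0))) P)"
      by (simp add: sum_distrib_left[symmetric] sum_subtractf finite_unit_faces)
  qed
  finally show ?thesis .
qed

lemma chain_boundary_eq_mat_apply:
  "{Q. c Q \<noteq> 0} \<subseteq> unit_faces n \<Longrightarrow> chain_boundary n c = mat_apply n (cube_boundary n) c"
  unfolding chain_boundary_def mat_apply_def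
  by (intro ext sum.mono_neutral_left finite_unit_faces) auto

lemma mat_apply_mat_apply: "mat_apply n f (mat_apply n g c) = mat_apply n (mat_mult n g f) c"
proof (rule ext)
  fix P
  have "mat_apply n f (mat_apply n g c) P = (\<Sum>Q'\<in>unit_faces n. \<Sum>Q\<in>unit_faces n. c Q * g Q Q' * f Q' P)"
    by (simp add: mat_apply_def sum_distrib_right)
  also have "\<dots> = (\<Sum>Q\<in>unit_faces n. \<Sum>Q'\<in>unit_faces n. c Q * g Q Q' * f Q' P)"
    by (rule sum.swap)
  also have "\<dots> = mat_apply n (mat_mult n g f) c P"
    by (simp add: mat_apply_def mat_mult_def sum_distrib_left mult.assoc)
  finally show "mat_apply n f (mat_apply n g c) P = mat_apply n (mat_mult n g f) c P" .
qed

lemma mat_apply_support: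
  assumes "mat_apply n f c P \<noteq> 0"
  obtains Q where "Q \<in> unit_faces n" "c Q \<noteq> 0" "f Q P \<noteq> 0"
proof -
  have "(\<Sum>Q\<in>unit_faces n. c Q * f Q P) \<noteq> 0" using assms by (simp add: mat_apply_def)
  then obtain Q where "Q \<in> unit_faces n" "c Q * f Q P \<noteq> 0"
    by (meson sum.neutral)
  then show thesis using that by simp
qed

lemma mat_apply_zero: "mat_apply n f (\<lambda>_. 0) = (\<lambda>_. 0)"
  by (simp add: mat_apply_def)

lemma mat_apply_add: "mat_apply n f (\<lambda>Q. c Q + d Q) = (\<lambda>P. mat_apply n f c P + mat_apply n f d P)"
  by (simp add: mat_apply_def algebra_simps sum.distrib)

lemma mat_apply_diff:
  "mat_apply n (\<lambda>Q P. f Q P - g Q P) c = (\<lambda>P. mat_apply n f c P - mat_apply n g c P)"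
  by (simp add: mat_apply_def right_diff_distrib sum_subtractf)

lemma mat_apply_delta:
  "{Q. c Q \<noteq> 0} \<subseteq> unit_faces n \<Longrightarrow> mat_apply n (\<lambda>Q P. if P = Q then 1 else 0) c = c"
  unfolding mat_apply_def
  by (rule ext) (auto simp: finite_unit_faces if_distrib cong: if_cong)

lemma chain_boundary_add:
  assumes "{Q. c Q \<noteq> 0} \<subseteq> unit_faces n" "{Q. d Q \<noteq> 0} \<subseteq> unit_faces n"
  shows "chain_boundary n (\<lambda>Q. c Q + d Q) = (\<lambda>P. chain_boundary n c P + chain_boundary n d P)"
proof -
  have "{Q. c Q + d Q \<noteq> 0} \<subseteq> {Q. c Q \<noteq> 0} \<union> {Q. d Q \<noteq> 0}" by auto
  then have "{Q. c Q + d Q \<noteq> 0} \<subseteq> unit_faces n" using assms by blast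
  then show ?thesis using assms by (simp add: chain_boundary_eq_mat_apply mat_apply_add)
qed

lemma mat_apply_cong:
  "(\<And>Q P. Q \<in> unit_faces n \<Longrightarrow> f Q P = g Q P) \<Longrightarrow> mat_apply n f c = mat_apply n g c"
  by (simp add: mat_apply_def)

section \<open>Collapsing a coordinate\<close>

text \<open>The sign of the sweep is what makes \<open>\<partial>h + h\<partial> = id - p\<close> (lemma \<open>collapse_chain_homotopy\<close>).\<close>
definition collapse_htpy :: "nat \<Rightarrow> nat \<Rightarrow> int \<Rightarrow> cube \<Rightarrow> cube \<Rightarrow> int" where
  "collapse_htpy n r v Q P =
     (if Q r = (1-v, 1-v) \<and> P = Q(r := (0,1)) then (if v = 0 then 1 else -1) * face_sign (nondeg n Q) r else 0)"

definition collapse_proj :: "nat \<Rightarrow> int \<Rightarrow> cube \<Rightarrow> cube \<Rightarrow> int" where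
  "collapse_proj r v Q P = (if fst (Q r) = snd (Q r) \<and> P = Q(r := (v,v)) then 1 else 0)"

lemma collapse_htpy_nonzero:
  "collapse_htpy n r v Q P \<noteq> 0 \<Longrightarrow> Q r = (1-v, 1-v) \<and> P = Q(r := (0,1))"
  by (simp add: collapse_htpy_def split: if_splits)

lemma collapse_proj_nonzero:
  "collapse_proj r v Q P \<noteq> 0 \<Longrightarrow> fst (Q r) = snd (Q r) \<and> P = Q(r := (v,v))"
  by (simp add: collapse_proj_def split: if_splits)

lemma mat_mult_collapse_htpy_left:
  assumes Q: "Q \<in> unit_faces n" and r: "r \<in> {1..n}"
  shows "mat_mult n (collapse_htpy n r v) g Q P =
    (if Q r = (1-v, 1-v) then (if v = 0 then 1 else -1) * face_sign (nondeg n Q) r * g (Q(r := (0,1))) P else 0)"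
proof -
  have QU: "Q(r := (0,1)) \<in> unit_faces n" using Q r by (intro unit_faces_upd) auto
  have "mat_mult n (collapse_htpy n r v) g Q P = (\<Sum>Q'\<in>unit_faces n. (if Q' = Q(r := (0,1)) then
      (if Q r = (1-v, 1-v) then (if v = 0 then 1 else -1) * face_sign (nondeg n Q) r else 0) else 0) * g Q' P)"
    unfolding mat_mult_def by (intro sum.cong refl) (auto simp: collapse_htpy_def)
  then show ?thesis by (simp add: sum_unit_faces_delta[OF QU])
qed

lemma mat_mult_collapse_proj_left:
  assumes Q: "Q \<in> unit_faces n" and r: "r \<in> {1..n}" and v: "v \<in> {0,1}"
  shows "mat_mult n (collapse_proj r v) g Q P = (if fst (Q r) = snd (Q r) then g (Q(r := (v,v))) P else 0)"
proof -
  have QU: "Q(r := (v,v)) \<in> unit_faces n" using Q r v by (intro unit_faces_upd) auto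
  have "mat_mult n (collapse_proj r v) g Q P = (\<Sum>Q'\<in>unit_faces n.
      (if Q' = Q(r := (v,v)) then (if fst (Q r) = snd (Q r) then 1 else 0) else 0) * g Q' P)"
    unfolding mat_mult_def by (intro sum.cong refl) (auto simp: collapse_proj_def)
  then show ?thesis by (simp add: sum_unit_faces_delta[OF QU])
qed

lemma collapse_chain_homotopy_opposite:
  assumes Q: "Q \<in> unit_faces n" and r: "r \<in> {1..n}" and v: "v \<in> {0,1}" and Qr: "Q r = (1-v, 1-v)"
  shows "mat_mult n (collapse_htpy n r v) (cube_boundary n) Q P + mat_mult n (cube_boundary n) (collapse_htpy n r v) Q P
     = (if P = Q then 1 else 0) - collapse_proj r v Q P"
proof -
  define N where "N = nondeg n Q"
  define e :: int where "e = (if v = 0 then 1 else -1)"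
  define D :: int where
    "D = (\<Sum>m\<in>N. (if r < m then -1 else 1) * face_sign N m * facet_difference (Q(r := (0,1))) m P)"
  have fN: "finite N" by (simp add: N_def finite_nondeg)
  have rN: "r \<notin> N" using Qr v by (auto simp: N_def nondeg_def)
  have h_bd: "mat_mult n (collapse_htpy n r v) (cube_boundary n) Q P =
      e * face_sign N r * (face_sign N r * facet_difference Q r P + D)"
    using mat_mult_collapse_htpy_left[OF Q r] cube_boundary_upd_interval[OF Q r rN[unfolded N_def]] Qr
    by (simp add: N_def e_def D_def)
  have h_facet: "collapse_htpy n r v (Q(m := (a,a))) P =
      (if P = Q(r := (0,1), m := (a,a)) then e * ((if m < r then -1 else 1) * face_sign N r) else 0)"
    if "m \<in> N" for m a
  proof -
    have "m \<noteq> r" using that rN by auto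
    then show ?thesis
      using Qr face_sign_remove[OF fN that, of r]
      by (auto simp: collapse_htpy_def e_def nondeg_upd_degenerate N_def fun_upd_twist)
  qed
  have "face_sign N m * (collapse_htpy n r v (Q(m := (1,1))) P - collapse_htpy n r v (Q(m := (0,0))) P) =
      - e * face_sign N r * ((if r < m then -1 else 1) * face_sign N m * facet_difference (Q(r := (0,1))) m P)"
    if m: "m \<in> N" for m
  proof -
    have "(if m < r then -1 else 1) = - (if r < m then -1 else (1::int))" using m rN by auto
    then show ?thesis
      using h_facet[OF m, of 1] h_facet[OF m, of 0] by (simp add: facet_difference_def algebra_simps)
  qed
  then have bd_h: "mat_mult n (cube_boundary n) (collapse_htpy n r v) Q P = - e * face_sign N r * D"
    unfolding mat_mult_cube_boundary_left[OF Q] D_def sum_distrib_left N_def[symmetric]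
    by (intro sum.cong refl)
  have "Q(r := (1,1)) \<noteq> Q(r := (0,0))" by (metis fun_upd_same prod.inject zero_neq_one)
  then have eX: "e * facet_difference Q r P = (if P = Q then 1 else 0) - collapse_proj r v Q P"
    using v Qr by (auto simp: e_def facet_difference_def collapse_proj_def)
  have "e * face_sign N r * (face_sign N r * facet_difference Q r P + D) + - e * face_sign N r * D =
      e * (face_sign N r * face_sign N r) * facet_difference Q r P"
    by (simp add: algebra_simps)
  then show ?thesis unfolding h_bd bd_h face_sign_square eX[symmetric] by simp
qed

lemma collapse_chain_homotopy_target:
  assumes Q: "Q \<in> unit_faces n" and r: "r \<in> {1..n}" and v: "v \<in> {0,1}" and Qr: "Q r = (v,v)"
  shows "mat_mult n (collapse_htpy n r v) (cube_boundary n) Q P + mat_mult n (cube_boundary n) (collapse_htpy n r v) Q P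
     = (if P = Q then 1 else 0) - collapse_proj r v Q P"
proof -
  have "r \<notin> nondeg n Q" using Qr by (simp add: nondeg_def)
  then have "collapse_htpy n r v (Q(m := (a,a))) P = 0" if "m \<in> nondeg n Q" for m a
    using that Qr v by (auto simp: collapse_htpy_def)
  then have "mat_mult n (cube_boundary n) (collapse_htpy n r v) Q P = 0"
    by (simp add: mat_mult_cube_boundary_left[OF Q])
  moreover have "mat_mult n (collapse_htpy n r v) (cube_boundary n) Q P = 0"
    using Qr v by (auto simp: mat_mult_collapse_htpy_left[OF Q r])
  moreover have "collapse_proj r v Q P = (if P = Q then 1 else 0)"
    using Qr by (auto simp: collapse_proj_def)
  ultimately show ?thesis by simp
qed

lemma collapse_chain_homotopy_nondeg:
  assumes Q: "Q \<in> unit_faces n" and r: "r \<in> {1..n}" and v: "v \<in> {0,1}" and Qr: "Q r = (0,1)"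
  shows "mat_mult n (collapse_htpy n r v) (cube_boundary n) Q P + mat_mult n (cube_boundary n) (collapse_htpy n r v) Q P
     = (if P = Q then 1 else 0) - collapse_proj r v Q P"
proof -
  define N where "N = nondeg n Q"
  define h where "h m = face_sign N m * (collapse_htpy n r v (Q(m := (1,1))) P - collapse_htpy n r v (Q(m := (0,0))) P)" for m
  have rN: "r \<in> N" using Qr r by (simp add: N_def nondeg_def)
  have "h m = 0" if "m \<in> N - {r}" for m
    using that Qr by (auto simp: h_def collapse_htpy_def)
  then have "sum h N = h r"
    using rN by (simp add: sum.remove[OF finite_nondeg[of n Q, folded N_def]] sum.neutral)
  also have "h r = (if P = Q then 1 else 0)"
  proof -
    have "Q(r := (0,1)) = Q" using Qr by auto
    then show ?thesis
      using v face_sign_square[of N r]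
      by (auto simp: h_def collapse_htpy_def nondeg_upd_degenerate face_sign_remove_self N_def)
  qed
  finally have "mat_mult n (cube_boundary n) (collapse_htpy n r v) Q P = (if P = Q then 1 else 0)"
    by (simp add: mat_mult_cube_boundary_left[OF Q] h_def N_def)
  moreover have "mat_mult n (collapse_htpy n r v) (cube_boundary n) Q P = 0"
    using Qr v by (auto simp: mat_mult_collapse_htpy_left[OF Q r])
  moreover have "collapse_proj r v Q P = 0" using Qr by (simp add: collapse_proj_def)
  ultimately show ?thesis by simp
qed

lemma collapse_chain_homotopy:
  assumes Q: "Q \<in> unit_faces n" and r: "r \<in> {1..n}" and v: "v \<in> {0,1}"
  shows "mat_mult n (collapse_htpy n r v) (cube_boundary n) Q P + mat_mult n (cube_boundary n) (collapse_htpy n r v) Q P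
     = (if P = Q then 1 else 0) - collapse_proj r v Q P"
proof -
  consider "Q r = (1-v, 1-v)" | "Q r = (v,v)" | "Q r = (0,1)"
    using unit_face_coord[OF Q r] v by auto
  then show ?thesis
    using collapse_chain_homotopy_opposite[OF Q r v] collapse_chain_homotopy_target[OF Q r v]
      collapse_chain_homotopy_nondeg[OF Q r v]
    by cases
qed

lemma collapse_proj_boundary_commute:
  assumes Q: "Q \<in> unit_faces n" and r: "r \<in> {1..n}" and v: "v \<in> {0,1}"
  shows "mat_mult n (collapse_proj r v) (cube_boundary n) Q P = mat_mult n (cube_boundary n) (collapse_proj r v) Q P"
proof (cases "fst (Q r) = snd (Q r)")
  case True
  define N where "N = nondeg n Q"
  have rN: "r \<notin> N" using True by (simp add: N_def nondeg_def)
  have QU: "Q(r := (v,v)) \<in> unit_faces n" using Q r v by (intro unit_faces_upd) auto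
  have "nondeg n (Q(r := (v,v))) = N" using rN by (simp add: nondeg_upd_degenerate N_def)
  then have "cube_boundary n (Q(r := (v,v))) P = (\<Sum>m\<in>N. face_sign N m * facet_difference (Q(r := (v,v))) m P)"
    using cube_boundary_unit_face[OF QU, of P] by simp
  also have "\<dots> = (\<Sum>m\<in>N. face_sign N m *
      (collapse_proj r v (Q(m := (1,1))) P - collapse_proj r v (Q(m := (0,0))) P))"
    using rN True by (intro sum.cong refl) (auto simp: collapse_proj_def facet_difference_def fun_upd_twist)
  finally show ?thesis
    using True by (simp add: mat_mult_collapse_proj_left[OF Q r v] mat_mult_cube_boundary_left[OF Q] N_def)
next
  case False
  have "collapse_proj r v (Q(m := (1,1))) P = collapse_proj r v (Q(m := (0,0))) P" for m
    using False by (cases "m = r") (auto simp: collapse_proj_def)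
  then show ?thesis
    using False by (simp add: mat_mult_collapse_proj_left[OF Q r v] mat_mult_cube_boundary_left[OF Q])
qed

lemma chain_boundary_collapse_htpy:
  assumes c: "{Q. c Q \<noteq> 0} \<subseteq> unit_faces n" and cyc: "chain_boundary n c = (\<lambda>_. 0)"
    and r: "r \<in> {1..n}" and v: "v \<in> {0,1}"
  shows "chain_boundary n (mat_apply n (collapse_htpy n r v) c) = (\<lambda>P. c P - mat_apply n (collapse_proj r v) c P)"
proof -
  have "{P. mat_apply n (collapse_htpy n r v) c P \<noteq> 0} \<subseteq> unit_faces n"
    using r by (auto elim!: mat_apply_support dest!: collapse_htpy_nonzero intro: unit_faces_upd)
  then have "chain_boundary n (mat_apply n (collapse_htpy n r v) c) =
      mat_apply n (mat_mult n (collapse_htpy n r v) (cube_boundary n)) c"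
    by (simp add: chain_boundary_eq_mat_apply mat_apply_mat_apply)
  also have "\<dots> = mat_apply n (\<lambda>Q P. ((if P = Q then 1 else 0) - collapse_proj r v Q P)
      - mat_mult n (cube_boundary n) (collapse_htpy n r v) Q P) c"
    using collapse_chain_homotopy[OF _ r v] by (intro mat_apply_cong) (simp add: eq_diff_eq)
  also have "\<dots> = (\<lambda>P. c P - mat_apply n (collapse_proj r v) c P)"
    using cyc by (simp add: mat_apply_diff mat_apply_delta[OF c] mat_apply_mat_apply[symmetric]
      chain_boundary_eq_mat_apply[OF c, symmetric] mat_apply_zero)
  finally show ?thesis .
qed

lemma chain_boundary_collapse_proj:
  assumes c: "{Q. c Q \<noteq> 0} \<subseteq> unit_faces n" and r: "r \<in> {1..n}" and v: "v \<in> {0,1}"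
  shows "chain_boundary n (mat_apply n (collapse_proj r v) c) = mat_apply n (collapse_proj r v) (chain_boundary n c)"
proof -
  have "{P. mat_apply n (collapse_proj r v) c P \<noteq> 0} \<subseteq> unit_faces n"
    using r v by (auto elim!: mat_apply_support dest!: collapse_proj_nonzero intro: unit_faces_upd)
  then have "chain_boundary n (mat_apply n (collapse_proj r v) c) =
      mat_apply n (mat_mult n (collapse_proj r v) (cube_boundary n)) c"
    by (simp add: chain_boundary_eq_mat_apply mat_apply_mat_apply)
  also have "\<dots> = mat_apply n (mat_mult n (cube_boundary n) (collapse_proj r v)) c"
    using collapse_proj_boundary_commute[OF _ r v] by (rule mat_apply_cong)
  finally show ?thesis by (simp add: chain_boundary_eq_mat_apply[OF c] mat_apply_mat_apply)
qed

definition faces_acyclic :: "nat \<Rightarrow> cube set \<Rightarrow> bool" where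
  "faces_acyclic n S \<longleftrightarrow> (\<forall>i\<ge>1. \<forall>c. {Q. c Q \<noteq> 0} \<subseteq> {Q\<in>S. cube_dim n Q = i} \<longrightarrow> chain_boundary n c = (\<lambda>_. 0) \<longrightarrow>
      (\<exists>d. {Q. d Q \<noteq> 0} \<subseteq> {Q\<in>S. cube_dim n Q = Suc i} \<and> chain_boundary n d = c))"

lemma faces_acyclic_collapse:
  assumes SU: "S \<subseteq> unit_faces n" and TS: "T \<subseteq> S" and r: "r \<in> {1..n}" and v: "v \<in> {0,1}"
    and sweep: "\<And>Q. Q \<in> S \<Longrightarrow> Q r = (1-v, 1-v) \<Longrightarrow> Q(r := (0,1)) \<in> S"
    and proj: "\<And>Q. Q \<in> S \<Longrightarrow> fst (Q r) = snd (Q r) \<Longrightarrow> Q(r := (v,v)) \<in> T"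
    and T_acyclic: "faces_acyclic n T"
  shows "faces_acyclic n S"
  unfolding faces_acyclic_def
proof (intro allI impI)
  fix i c assume i: "1 \<le> i" and c: "{Q. c Q \<noteq> 0} \<subseteq> {Q\<in>S. cube_dim n Q = i}"
    and cyc: "chain_boundary n c = (\<lambda>_. 0)"
  have cU: "{Q. c Q \<noteq> 0} \<subseteq> unit_faces n" using c SU by auto
  define H where "H = mat_apply n (collapse_htpy n r v) c"
  define p where "p = mat_apply n (collapse_proj r v) c"
  have H_supp: "{P. H P \<noteq> 0} \<subseteq> {Q\<in>S. cube_dim n Q = Suc i}"
  proof
    fix P assume "P \<in> {P. H P \<noteq> 0}"
    then obtain Q where Q: "Q \<in> unit_faces n" "c Q \<noteq> 0" "Q r = (1-v, 1-v)" "P = Q(r := (0,1))"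
      unfolding H_def by (auto elim!: mat_apply_support dest!: collapse_htpy_nonzero)
    have "r \<notin> nondeg n Q" using Q(3) by (simp add: nondeg_def)
    then show "P \<in> {Q\<in>S. cube_dim n Q = Suc i}"
      using Q c sweep cube_dim_upd_interval[OF Q(1) r] by auto
  qed
  have p_supp: "{P. p P \<noteq> 0} \<subseteq> {Q\<in>T. cube_dim n Q = i}"
  proof
    fix P assume "P \<in> {P. p P \<noteq> 0}"
    then obtain Q where Q: "Q \<in> unit_faces n" "c Q \<noteq> 0" "fst (Q r) = snd (Q r)" "P = Q(r := (v,v))"
      unfolding p_def by (auto elim!: mat_apply_support dest!: collapse_proj_nonzero)
    have "r \<notin> nondeg n Q" using Q(3) by (simp add: nondeg_def)
    then show "P \<in> {Q\<in>T. cube_dim n Q = i}"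
      using Q c proj cube_dim_upd_degenerate by auto
  qed
  have "chain_boundary n p = (\<lambda>_. 0)"
    unfolding p_def chain_boundary_collapse_proj[OF cU r v] cyc by (rule mat_apply_zero)
  then obtain d where d: "{Q. d Q \<noteq> 0} \<subseteq> {Q\<in>T. cube_dim n Q = Suc i}" "chain_boundary n d = p"
    using T_acyclic i p_supp unfolding faces_acyclic_def by blast
  have "{Q. d Q + H Q \<noteq> 0} \<subseteq> {Q. d Q \<noteq> 0} \<union> {Q. H Q \<noteq> 0}" by auto
  then have "{Q. d Q + H Q \<noteq> 0} \<subseteq> {Q\<in>S. cube_dim n Q = Suc i}"
    using d(1) H_supp TS by blast
  moreover have "chain_boundary n (\<lambda>Q. d Q + H Q) = (\<lambda>P. p P + (c P - p P))"
    using d H_supp SU TS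
    by (subst chain_boundary_add) (auto simp: H_def p_def chain_boundary_collapse_htpy[OF cU cyc r v])
  ultimately show "\<exists>d. {Q. d Q \<noteq> 0} \<subseteq> {Q\<in>S. cube_dim n Q = Suc i} \<and> chain_boundary n d = c"
    by (intro exI[of _ "\<lambda>Q. d Q + H Q"]) simp
qed

lemma trivial_homology_if_faces_acyclic:
  assumes cubes: "\<And>i. cubes_of n X i = {Q\<in>S. cube_dim n Q = i}"
    and SU: "S \<subseteq> unit_faces n" and S: "faces_acyclic n S" and i: "1 \<le> i"
  shows "trivial_homology n X i"
  unfolding trivial_homology_def
proof (intro ballI impI)
  fix c assume "c \<in> chains n X i" and cyc: "chain_boundary n c = (\<lambda>_. 0)"
  then have "{Q. c Q \<noteq> 0} \<subseteq> {Q\<in>S. cube_dim n Q = i}" by (simp add: chains_def cubes)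
  then obtain d where d: "{Q. d Q \<noteq> 0} \<subseteq> {Q\<in>S. cube_dim n Q = Suc i}" "chain_boundary n d = c"
    using S i cyc unfolding faces_acyclic_def by blast
  moreover have "finite {Q. d Q \<noteq> 0}"
    using d(1) SU by (blast intro: finite_subset[OF _ finite_unit_faces])
  ultimately show "\<exists>d\<in>chains n X (Suc i). chain_boundary n d = c"
    by (auto simp: chains_def cubes)
qed

section \<open>The cubical set\<close>

definition X_set :: "nat \<Rightarrow> nat \<Rightarrow> point set" where
  "X_set n k = (\<Union>i\<in>{1..k}. \<Union>j\<in>{1..n} - {i}. realization n (interval_cube n {i} ({1..n} - {j})))"

definition box_face :: "nat \<Rightarrow> nat \<Rightarrow> nat \<Rightarrow> point set" where
  "box_face n i j = {x. (\<forall>m\<in>{1..n}. 0 \<le> x m \<and> x m \<le> 1) \<and> x i = 1 \<and> x j = 0 \<and> (\<forall>m. m \<notin> {1..n} \<longrightarrow> x m = 0)}"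

definition X_faces :: "nat \<Rightarrow> nat \<Rightarrow> cube set" where
  "X_faces n k = {Q\<in>unit_faces n. (\<exists>i\<in>{1..k}. Q i = (1,1)) \<and> (\<exists>j\<in>{1..n}. Q j = (0,0))}"

lemma realization_interval_cube_singleton:
  assumes "i \<in> {1..n}" "j \<in> {1..n}" "i \<noteq> j"
  shows "realization n (interval_cube n {i} ({1..n} - {j})) = box_face n i j"
  using assms by (auto simp: realization_def interval_cube_def box_face_def)

lemma X_set_eq_box_faces: "k < n \<Longrightarrow> X_set n k = (\<Union>i\<in>{1..k}. \<Union>j\<in>{1..n} - {i}. box_face n i j)"
  unfolding X_set_def by (intro SUP_cong refl realization_interval_cube_singleton) auto

definition cube_center :: "cube \<Rightarrow> point" where
  "cube_center Q = (\<lambda>m. (real_of_int (fst (Q m)) + real_of_int (snd (Q m))) / 2)"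

lemma cube_center_in_realization: "elementary_cube n Q \<Longrightarrow> cube_center Q \<in> realization n Q"
  by (fastforce simp: elementary_cube_def realization_def cube_center_def)

lemma elementary_cube_coord_by_center:
  assumes "elementary_cube n Q" "m \<in> {1..n}" "0 \<le> cube_center Q m" "cube_center Q m \<le> 1"
  shows "Q m = (0,0) \<and> cube_center Q m = 0 \<or> Q m = (1,1) \<and> cube_center Q m = 1 \<or>
         Q m = (0,1) \<and> cube_center Q m = 1/2"
proof -
  obtain a b where Qm: "Q m = (a,b)" by fastforce
  have "snd (Q m) - fst (Q m) \<in> {0,1}" using assms(1,2) unfolding elementary_cube_def by blast
  then have "b - a \<in> {0,1}" using Qm by simp
  moreover have "0 \<le> a + b" "a + b \<le> 2"
    using assms(3,4) Qm by (simp_all add: cube_center_def)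
  ultimately have "a = 0 \<and> b = 0 \<or> a = 1 \<and> b = 1 \<or> a = 0 \<and> b = 1" by auto
  then show ?thesis using Qm by (auto simp: cube_center_def)
qed

lemma realization_subset_box_face:
  assumes "Q \<in> unit_faces n" "Q i = (1,1)" "Q j = (0,0)" "i \<in> {1..n}" "j \<in> {1..n}"
  shows "realization n Q \<subseteq> box_face n i j"
proof
  fix x assume x: "x \<in> realization n Q"
  have bounds: "real_of_int (fst (Q m)) \<le> x m \<and> x m \<le> real_of_int (snd (Q m))" if "m \<in> {1..n}" for m
    using x that unfolding realization_def by blast
  have "0 \<le> x m \<and> x m \<le> 1" if "m \<in> {1..n}" for m
    using unit_face_coord[OF assms(1) that] bounds[OF that] by auto
  moreover have "x i = 1" "x j = 0" using x assms(2-5) by (force simp: realization_def)+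
  ultimately show "x \<in> box_face n i j" using x by (simp add: box_face_def realization_def)
qed

lemma elementary_cube_subset_X_set_iff:
  assumes kn: "k < n"
  shows "elementary_cube n Q \<and> realization n Q \<subseteq> X_set n k \<longleftrightarrow> Q \<in> X_faces n k"
proof
  assume Q: "elementary_cube n Q \<and> realization n Q \<subseteq> X_set n k"
  then have "cube_center Q \<in> X_set n k" using cube_center_in_realization by blast
  then obtain i j where ij: "i \<in> {1..k}" "j \<in> {1..n} - {i}" "cube_center Q \<in> box_face n i j"
    unfolding X_set_eq_box_faces[OF kn] by blast
  have coord: "Q m = (0,0) \<and> cube_center Q m = 0 \<or> Q m = (1,1) \<and> cube_center Q m = 1 \<or>
      Q m = (0,1) \<and> cube_center Q m = 1/2" if "m \<in> {1..n}" for m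
    using elementary_cube_coord_by_center[of n Q m] Q ij(3) that by (simp add: box_face_def)
  have "Q \<in> unit_faces n"
    using coord Q by (fastforce simp: unit_faces_def elementary_cube_def)
  moreover have "Q i = (1,1)" "Q j = (0,0)"
    using coord[of i] coord[of j] ij kn by (auto simp: box_face_def)
  ultimately show "Q \<in> X_faces n k" using ij by (auto simp: X_faces_def)
next
  assume "Q \<in> X_faces n k"
  then obtain i j where Q: "Q \<in> unit_faces n" "i \<in> {1..k}" "Q i = (1,1)" "j \<in> {1..n}" "Q j = (0,0)"
    by (auto simp: X_faces_def)
  then have "realization n Q \<subseteq> box_face n i j" "j \<in> {1..n} - {i}"
    using kn by (auto intro: realization_subset_box_face[THEN subsetD])
  then show "elementary_cube n Q \<and> realization n Q \<subseteq> X_set n k"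
    using Q(1,2) elementary_cube_unit_face unfolding X_set_eq_box_faces[OF kn] by blast
qed

definition retract_faces :: "nat \<Rightarrow> nat \<Rightarrow> nat \<Rightarrow> cube set" where
  "retract_faces n k t =
     {Q\<in>unit_faces n. Q n = (0,0) \<and> (\<exists>i\<in>{1..k}. Q i = (1,1)) \<and> (\<forall>m\<in>{1..<t}. Q m = (1,1))}"

lemma faces_acyclic_retract_faces_last: "faces_acyclic n (retract_faces n k n)"
proof -
  have "nondeg n Q = {}" if "Q \<in> retract_faces n k n" for Q
    using that by (force simp: retract_faces_def nondeg_unit_face)
  then have "{Q\<in>retract_faces n k n. cube_dim n Q = i} = {}" if "1 \<le> i" for i
    using that by (auto simp: cube_dim_def)
  then have "c = (\<lambda>_. 0)" if "1 \<le> i" "{Q. c Q \<noteq> 0} \<subseteq> {Q\<in>retract_faces n k n. cube_dim n Q = i}" for i c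
    using that by auto
  then show ?thesis
    unfolding faces_acyclic_def by (auto intro!: exI[of _ "\<lambda>_. 0"] simp: chain_boundary_def)
qed

lemma faces_acyclic_retract_faces:
  assumes "1 \<le> t" "t \<le> n"
  shows "faces_acyclic n (retract_faces n k t)"
  using assms(2,1)
proof (induction t rule: inc_induct)
  case base
  show ?case by (rule faces_acyclic_retract_faces_last)
next
  case (step t)
  show ?case
  proof (rule faces_acyclic_collapse[where T = "retract_faces n k (Suc t)" and r = t and v = 1])
    fix Q assume Q: "Q \<in> retract_faces n k t" "Q t = (1-1, 1-1)"
    then obtain i where "i \<in> {1..k}" "Q i = (1,1)" by (auto simp: retract_faces_def)
    moreover have "i \<noteq> t" using Q \<open>Q i = (1,1)\<close> by auto
    ultimately show "Q(t := (0,1)) \<in> retract_faces n k t"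
      using Q step.hyps step.prems by (auto simp: retract_faces_def intro!: unit_faces_upd)
  next
    fix Q assume Q: "Q \<in> retract_faces n k t" "fst (Q t) = snd (Q t)"
    then show "Q(t := (1,1)) \<in> retract_faces n k (Suc t)"
      using step.hyps step.prems by (auto simp: retract_faces_def less_Suc_eq intro!: unit_faces_upd)
  qed (use step in \<open>auto simp: retract_faces_def\<close>)
qed

lemma faces_acyclic_X_faces:
  assumes "1 \<le> k" "k < n"
  shows "faces_acyclic n (X_faces n k)"
proof (rule faces_acyclic_collapse[where T = "retract_faces n k 1" and r = n and v = 0])
  fix Q assume Q: "Q \<in> X_faces n k" "Q n = (1-0, 1-0)"
  then obtain i j where "i \<in> {1..k}" "Q i = (1,1)" "j \<in> {1..n}" "Q j = (0,0)"
    by (auto simp: X_faces_def)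
  moreover have "j \<noteq> n" using Q \<open>Q j = (0,0)\<close> by auto
  ultimately show "Q(n := (0,1)) \<in> X_faces n k"
    using Q assms by (auto simp: X_faces_def intro!: unit_faces_upd)
next
  fix Q assume Q: "Q \<in> X_faces n k" "fst (Q n) = snd (Q n)"
  then obtain i where "i \<in> {1..k}" "Q i = (1,1)" by (auto simp: X_faces_def)
  then show "Q(n := (0,0)) \<in> retract_faces n k 1"
    using Q assms by (auto simp: X_faces_def retract_faces_def intro!: unit_faces_upd)
next
  show "faces_acyclic n (retract_faces n k 1)" using assms by (intro faces_acyclic_retract_faces) auto
qed (use assms in \<open>auto simp: X_faces_def retract_faces_def\<close>)

section \<open>Connectedness\<close>

lemma connectedin_if_segments:
  assumes "\<And>x y t. x \<in> S \<Longrightarrow> y \<in> S \<Longrightarrow> t \<in> {0..1} \<Longrightarrow> (\<lambda>m. (1 - t) * x m + t * y m) \<in> S"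
  shows "connectedin (product_topology (\<lambda>_. euclideanreal) UNIV) S"
proof (rule path_connectedin_imp_connectedin, unfold path_connectedin, intro conjI ballI)
  fix x y assume "x \<in> S" "y \<in> S"
  define g where "g = (\<lambda>t::real. \<lambda>m. (1 - t) * x m + t * y m)"
  have "pathin (product_topology (\<lambda>_. euclideanreal) UNIV) g"
    unfolding pathin_def continuous_map_componentwise_UNIV g_def
    by (intro allI continuous_intros) auto
  moreover have "g \<in> {0..1} \<rightarrow> S" "g 0 = x" "g 1 = y"
    using assms \<open>x \<in> S\<close> \<open>y \<in> S\<close> by (auto simp: g_def)
  ultimately show "\<exists>g. pathin (product_topology (\<lambda>_. euclideanreal) UNIV) g \<and> g \<in> {0..1} \<rightarrow> S \<and> g 0 = x \<and> g 1 = y"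
    by blast
qed simp

lemma connectedin_box_face: "connectedin (product_topology (\<lambda>_. euclideanreal) UNIV) (box_face n i j)"
proof (rule connectedin_if_segments)
  fix x y and t :: real assume x: "x \<in> box_face n i j" and y: "y \<in> box_face n i j" and t: "t \<in> {0..1}"
  have "0 \<le> (1 - t) * x m + t * y m \<and> (1 - t) * x m + t * y m \<le> 1" if "m \<in> {1..n}" for m
    using x y t that by (auto simp: box_face_def intro!: convex_bound_le)
  then show "(\<lambda>m. (1 - t) * x m + t * y m) \<in> box_face n i j"
    using x y by (simp add: box_face_def algebra_simps)
qed

lemma connectedin_X_set:
  assumes "1 \<le> k" "k < n"
  shows "connectedin (product_topology (\<lambda>_. euclideanreal) UNIV) (X_set n k)"
proof -
  let ?boxes = "\<lambda>i. \<Union>j\<in>{1..n} - {i}. box_face n i j"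
  have "connectedin (product_topology (\<lambda>_. euclideanreal) UNIV) (?boxes i)" if "i \<in> {1..k}" for i
  proof (rule connectedin_Union)
    have "(\<lambda>m. if m = i then 1 else 0) \<in> box_face n i j" if "j \<in> {1..n} - {i}" for j
      using that \<open>i \<in> {1..k}\<close> assms by (auto simp: box_face_def)
    then show "\<Inter> (box_face n i ` ({1..n} - {i})) \<noteq> {}" by blast
  qed (auto simp: connectedin_box_face)
  moreover have "(\<lambda>m. if m \<in> {1..<n} then 1 else 0) \<in> ?boxes i" if "i \<in> {1..k}" for i
  proof -
    have "(\<lambda>m. if m \<in> {1..<n} then 1 else 0) \<in> box_face n i n" using that assms by (auto simp: box_face_def)
    then show ?thesis using that assms by auto
  qed
  ultimately have "connectedin (product_topology (\<lambda>_. euclideanreal) UNIV) (\<Union> (?boxes ` {1..k}))"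
    by (intro connectedin_Union) blast+
  then show ?thesis using X_set_eq_box_faces[OF assms(2)] by simp
qed

theorem lemma3:
  fixes n k :: nat
  assumes "n \<ge> 2" and "k \<ge> 1" and "k < n"
  shows "acyclic_cubical n
           (\<Union>i\<in>{1..k}. \<Union>j\<in>{1..n} - {i}. realization n (interval_cube n {i} ({1..n} - {j})))"
proof -
  have "(\<lambda>m. if m \<in> {1..<n} then 1 else 0) \<in> box_face n 1 n"
    using assms by (auto simp: box_face_def)
  moreover have "1 \<in> {1..k}" "n \<in> {1..n} - {1}" using assms by auto
  ultimately have "X_set n k \<noteq> {}" unfolding X_set_eq_box_faces[OF assms(3)] by blast
  moreover have "cubes_of n (X_set n k) i = {Q\<in>X_faces n k. cube_dim n Q = i}" for i
    using elementary_cube_subset_X_set_iff[OF assms(3)] by (auto simp: cubes_of_def)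
  then have "trivial_homology n (X_set n k) i" if "1 \<le> i" for i
    using faces_acyclic_X_faces[OF assms(2,3)] that
    by (intro trivial_homology_if_faces_acyclic) (auto simp: X_faces_def)
  ultimately show ?thesis
    using connectedin_X_set[OF assms(2,3)] by (simp add: acyclic_cubical_def X_set_def)
qed

end
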